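(* Let $(x_0,x_1)$ be a state with $0\leq x_0\leq 1$ for which the character $ch(x_0,x_1)$ is defined, and let $q\geq 0$ be an integer with $q\leq ch(x_0,x_1)$. Then Paul has a winning strategy for the $q$-round pathological liar game with $1$ lie and initial state $(x_0,x_1)$.
   Context: Pathological liar game with $1$ lie: a state is a pair $(x_0,x_1)$ of nonnegative integers. In each round Paul chooses a legal question $(a_0,a_1)$ with integers $0\leq a_i\leq x_i$, and Carole answers Y or N; the new state is $(a_0,\,a_1+x_0-a_0)$ after Y, or $(x_0-a_0,\,x_1-a_1+a_0)$ after N. Paul wins the $q$-round game iff after $q$ rounds $x_0+x_1\geq 1$. Weight: $wt_q(x_0,x_1)=(q+1)x_0+x_1$. The character $ch(x_0,x_1)$ is the maximum integer $q\geq 0$ such that $wt_q(x_0,x_1)\geq 2^q$. *)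

theory Defs
  imports Main
begin

fun liar_Y :: "nat \<times> nat \<Rightarrow> nat \<times> nat \<Rightarrow> nat \<times> nat" where
  "liar_Y (x0, x1) (a0, a1) = (a0, a1 + (x0 - a0))"

fun liar_N :: "nat \<times> nat \<Rightarrow> nat \<times> nat \<Rightarrow> nat \<times> nat" where
  "liar_N (x0, x1) (a0, a1) = (x0 - a0, (x1 - a1) + a0)"

fun paul_wins :: "nat \<Rightarrow> nat \<times> nat \<Rightarrow> bool" where
  "paul_wins 0 (x0, x1) = (x0 + x1 \<ge> 1)"
| "paul_wins (Suc q) (x0, x1) =
     (\<exists>a0 a1. a0 \<le> x0 \<and> a1 \<le> x1 \<and>
        paul_wins q (liar_Y (x0, x1) (a0, a1)) \<and>
        paul_wins q (liar_N (x0, x1) (a0, a1)))"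

definition wt :: "nat \<Rightarrow> nat \<Rightarrow> nat \<Rightarrow> nat" where
  "wt q x0 x1 = (q + 1) * x0 + x1"

definition ch_defined :: "nat \<Rightarrow> nat \<Rightarrow> bool" where
  "ch_defined x0 x1 \<longleftrightarrow> (\<exists>q. wt q x0 x1 \<ge> 2 ^ q) \<and> finite {q. wt q x0 x1 \<ge> 2 ^ q}"

definition ch :: "nat \<Rightarrow> nat \<Rightarrow> nat" where
  "ch x0 x1 = (GREATEST q. wt q x0 x1 \<ge> 2 ^ q)"

end

theory Submission
  imports Defs
begin

text \<open>Conservation of weight: every question splits wt_(q+1) of a state exactly into the
weights wt_q of its two successors.  With x0 \<le> 1 Paul asks (0, 2^q - x0): answer Y leaves
(0, 2^q), of weight exactly 2^q, so answer N keeps weight at least 2^q, and both successors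
again satisfy x0 \<le> 1.  By induction wt_q \<ge> 2^q suffices to win the q-round game.  Finally,
wt_q \<ge> 2^q is inherited from the character down to every smaller q, since lowering q by
one decreases wt_q by x0 \<le> 1 but halves 2^q.\<close>

lemma wt_liar_Y_plus_wt_liar_N:
  assumes "a0 \<le> x0" and "a1 \<le> x1"
  shows "case_prod (wt q) (liar_Y (x0, x1) (a0, a1)) + case_prod (wt q) (liar_N (x0, x1) (a0, a1))
           = wt (Suc q) x0 x1"
proof -
  obtain d0 d1 where "x0 = a0 + d0" and "x1 = a1 + d1"
    using assms le_Suc_ex by blast
  then show ?thesis
    by (simp add: wt_def algebra_simps)
qed

lemma paul_wins_if_pow_le_wt:
  assumes "x0 \<le> 1" and "2 ^ q \<le> wt q x0 x1"
  shows "paul_wins q (x0, x1)"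
  using assms
proof (induction q arbitrary: x0 x1)
  case 0
  then show ?case by (simp add: wt_def)
next
  case (Suc q)
  define a1 :: nat where "a1 = 2 ^ q - x0"
  have "x0 * (q + 1) \<le> 2 ^ q"
    using Suc.prems(1) Suc_leI[OF less_exp[of q]] by (cases "x0 = 0") (auto simp: le_Suc_eq)
  then have a1_le: "a1 \<le> x1"
    using Suc.prems(2) by (simp add: a1_def wt_def algebra_simps)
  have Y: "liar_Y (x0, x1) (0, a1) = (0, 2 ^ q)"
    using \<open>x0 * (q + 1) \<le> 2 ^ q\<close> by (simp add: a1_def)
  have "case_prod (wt q) (liar_N (x0, x1) (0, a1)) = wt (Suc q) x0 x1 - 2 ^ q"
    using wt_liar_Y_plus_wt_liar_N[of 0 x0 a1 x1 q] a1_le Y by (simp add: wt_def)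
  then have "2 ^ q \<le> case_prod (wt q) (liar_N (x0, x1) (0, a1))"
    using Suc.prems(2) by simp
  then have "paul_wins q (liar_N (x0, x1) (0, a1))"
    using Suc.IH Suc.prems(1) by (simp add: a1_le)
  moreover have "paul_wins q (liar_Y (x0, x1) (0, a1))"
    unfolding Y by (rule Suc.IH) (simp_all add: wt_def)
  ultimately show ?case
    using a1_le unfolding paul_wins.simps by blast
qed

lemma pow_le_wt_downward_closed:
  assumes "x0 \<le> 1" and "2 ^ c \<le> wt c x0 x1" and "q \<le> c"
  shows "2 ^ q \<le> wt q x0 x1"
  using assms(3)
proof (induction rule: inc_induct)
  case base
  show ?case using assms(2) .
next
  case (step n)
  have "wt (Suc n) x0 x1 \<le> wt n x0 x1 + 1"
    using assms(1) by (simp add: wt_def)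
  moreover have "(1::nat) \<le> 2 ^ n"
    by simp
  ultimately show ?case
    using step.IH by simp
qed

lemma pow_le_wt_ch:
  assumes "ch_defined x0 x1"
  shows "2 ^ ch x0 x1 \<le> wt (ch x0 x1) x0 x1"
proof -
  obtain k where k: "2 ^ k \<le> wt k x0 x1" and fin: "finite {q. 2 ^ q \<le> wt q x0 x1}"
    using assms unfolding ch_defined_def by blast
  show ?thesis
    unfolding ch_def
    by (rule GreatestI_nat[of _ k "Max {q. 2 ^ q \<le> wt q x0 x1}"]) (use k fin in auto)
qed

theorem lemma12:
  fixes x0 x1 q :: nat
  assumes "x0 \<le> 1"
    and "ch_defined x0 x1"
    and "q \<le> ch x0 x1"
  shows "paul_wins q (x0, x1)"
proof -
  have "2 ^ q \<le> wt q x0 x1"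
    using pow_le_wt_downward_closed[OF assms(1) pow_le_wt_ch[OF assms(2)] assms(3)] .
  then show ?thesis
    using paul_wins_if_pow_le_wt assms(1) by blast
qed

end
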